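(* For every finite simple graph $G$, $\chi_{DP}(G) \le 2\,AT(G)$.
   Context: Correspondence chromatic number: a correspondence assignment $(L,C)$ for $G$ consists of a list $L(v)$ for each vertex and, for each edge $uv$, a partial matching $C_{uv}$ between $\{u\}\times L(u)$ and $\{v\}\times L(v)$; an $(L,C)$-coloring is a choice $\phi(v)\in L(v)$ for all $v$ such that for every edge $uv$, $(u,\phi(u))$ and $(v,\phi(v))$ are not matched in $C_{uv}$; $\chi_{DP}(G)$ is the least $k$ such that $G$ has an $(L,C)$-coloring for every correspondence assignment with all lists of size $k$. Alon--Tarsi number: for a digraph $D$, an Eulerian subdigraph is a spanning subdigraph $F$ with $d^+_F(v)=d^-_F(v)$ for all $v$, even or odd according to the parity of its number of edges; $AT(G)$ is the minimum $k$ such that some orientation $D$ of $G$ has all outdegrees less than $k$ and the numbers of even and odd Eulerian subdigraphs of $D$ differ. *)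

theory Defs
  imports Main
begin

definition simple_graph :: "'a set \<Rightarrow> 'a set set \<Rightarrow> bool" where
  "simple_graph V E \<longleftrightarrow> finite V \<and>
     (\<forall>e\<in>E. \<exists>u v. u \<noteq> v \<and> u \<in> V \<and> v \<in> V \<and> e = {u, v})"

text \<open>Correspondence assignment (L, C): L v is a finite list of colours of size k;
  for adjacent u, v, C u v is a partial matching between L u and L v
  (a pair (c, d) in C u v means that (u, c) is matched with (v, d));
  C v u is the same matching read from the other side.\<close>
definition corr_assignment ::
  "'a set \<Rightarrow> 'a set set \<Rightarrow> nat \<Rightarrow> ('a \<Rightarrow> nat set) \<Rightarrow> ('a \<Rightarrow> 'a \<Rightarrow> (nat \<times> nat) set) \<Rightarrow> bool" where
  "corr_assignment V E k L C \<longleftrightarrow>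
     (\<forall>v\<in>V. finite (L v) \<and> card (L v) = k) \<and>
     (\<forall>u v. {u, v} \<in> E \<longrightarrow>
        C u v \<subseteq> L u \<times> L v \<and>
        C v u = converse (C u v) \<and>
        (\<forall>c d d'. (c, d) \<in> C u v \<and> (c, d') \<in> C u v \<longrightarrow> d = d') \<and>
        (\<forall>c c' d. (c, d) \<in> C u v \<and> (c', d) \<in> C u v \<longrightarrow> c = c'))"

definition corr_coloring ::
  "'a set \<Rightarrow> 'a set set \<Rightarrow> ('a \<Rightarrow> nat set) \<Rightarrow> ('a \<Rightarrow> 'a \<Rightarrow> (nat \<times> nat) set) \<Rightarrow> ('a \<Rightarrow> nat) \<Rightarrow> bool" where
  "corr_coloring V E L C \<phi> \<longleftrightarrow>
     (\<forall>v\<in>V. \<phi> v \<in> L v) \<and>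
     (\<forall>u v. {u, v} \<in> E \<longrightarrow> (\<phi> u, \<phi> v) \<notin> C u v)"

definition chi_DP :: "'a set \<Rightarrow> 'a set set \<Rightarrow> nat" where
  "chi_DP V E = (LEAST k. \<forall>L C. corr_assignment V E k L C \<longrightarrow>
                     (\<exists>\<phi>. corr_coloring V E L C \<phi>))"

definition orientation :: "'a set set \<Rightarrow> ('a \<times> 'a) set \<Rightarrow> bool" where
  "orientation E D \<longleftrightarrow>
     (\<forall>(u, v)\<in>D. u \<noteq> v \<and> {u, v} \<in> E) \<and>
     (\<forall>u v. u \<noteq> v \<and> {u, v} \<in> E \<longrightarrow> ((u, v) \<in> D \<longleftrightarrow> (v, u) \<notin> D))"

definition outdeg :: "('a \<times> 'a) set \<Rightarrow> 'a \<Rightarrow> nat" where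
  "outdeg F v = card {w. (v, w) \<in> F}"

definition indeg :: "('a \<times> 'a) set \<Rightarrow> 'a \<Rightarrow> nat" where
  "indeg F v = card {w. (w, v) \<in> F}"

definition eulerian_subdigraphs :: "'a set \<Rightarrow> ('a \<times> 'a) set \<Rightarrow> ('a \<times> 'a) set set" where
  "eulerian_subdigraphs V D = {F. F \<subseteq> D \<and> (\<forall>v\<in>V. outdeg F v = indeg F v)}"

definition even_eulerian :: "'a set \<Rightarrow> ('a \<times> 'a) set \<Rightarrow> nat" where
  "even_eulerian V D = card {F \<in> eulerian_subdigraphs V D. even (card F)}"

definition odd_eulerian :: "'a set \<Rightarrow> ('a \<times> 'a) set \<Rightarrow> nat" where
  "odd_eulerian V D = card {F \<in> eulerian_subdigraphs V D. odd (card F)}"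

definition AT :: "'a set \<Rightarrow> 'a set set \<Rightarrow> nat" where
  "AT V E = (LEAST k. \<exists>D. orientation E D \<and> (\<forall>v\<in>V. outdeg D v < k) \<and>
                         even_eulerian V D \<noteq> odd_eulerian V D)"

end

theory Submission
  imports Defs
begin

(* Let D be an orientation of G with all outdegrees below AT(G); the minimum defining AT(G) is
   attained, because an acyclic orientation has the empty digraph as its only Eulerian
   subdigraph. A vertex set S spans at most the sum of the outdegrees in S, i.e. fewer than
   |S| AT(G) edges, so it contains a vertex with fewer than 2 AT(G) neighbours in S. Hence G can
   be coloured greedily, always colouring last a vertex of small degree in what remains, from
   any correspondence assignment with lists of size 2 AT(G): each coloured neighbour u of v is
   matched with at most one colour of v and so forbids at most one colour. *)

lemma simple_graph_edgeD:
  assumes "simple_graph V E" and "{u, v} \<in> E"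
  shows "u \<in> V" and "v \<in> V" and "u \<noteq> v"
  using assms unfolding simple_graph_def by (auto simp: doubleton_eq_iff)

lemma orientation_arcD:
  assumes "orientation E D" and "(u, v) \<in> D"
  shows "{u, v} \<in> E" and "u \<noteq> v"
  using assms unfolding orientation_def by auto

lemma orientation_edge_cases:
  assumes "orientation E D" and "{u, v} \<in> E" and "u \<noteq> v"
  shows "(u, v) \<in> D \<or> (v, u) \<in> D"
  using assms unfolding orientation_def by blast

lemma orientation_out_neighbours_subset:
  assumes "simple_graph V E" and "orientation E D"
  shows "{w. (v, w) \<in> D} \<subseteq> V"
  using assms by (auto dest: orientation_arcD simple_graph_edgeD)

lemma orientation_by_ranking:
  fixes f :: "'a \<Rightarrow> 'b::linorder"
  assumes "simple_graph V E" and "inj_on f V"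
  shows "orientation E {(u, v). {u, v} \<in> E \<and> f u < f v}"
  unfolding orientation_def
proof (intro conjI allI impI)
  fix u v assume "u \<noteq> v \<and> {u, v} \<in> E"
  moreover from this have "f u \<noteq> f v"
    using assms by (meson inj_on_eq_iff simple_graph_edgeD)
  ultimately show "((u, v) \<in> {(u, v). {u, v} \<in> E \<and> f u < f v}) \<longleftrightarrow>
                   ((v, u) \<notin> {(u, v). {u, v} \<in> E \<and> f u < f v})"
    by (auto simp: insert_commute)
qed auto

lemma eulerian_subdigraph_of_ranked_empty:
  fixes f :: "'a \<Rightarrow> 'b::linorder"
  assumes F: "F \<in> eulerian_subdigraphs V D" and "finite F" and "Range D \<subseteq> V"
    and ranked: "\<And>u v. (u, v) \<in> D \<Longrightarrow> f u < f v"
  shows "F = {}"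
proof (rule ccontr)
  assume "F \<noteq> {}"
  have FD: "F \<subseteq> D" and balanced: "\<forall>v\<in>V. outdeg F v = indeg F v"
    using F by (auto simp: eulerian_subdigraphs_def)
  \<comment> \<open>an arc of F whose head has maximal rank cannot be followed by an arc of F\<close>
  obtain x w where xw: "(x, w) \<in> F" and w_max: "\<And>y z. (y, z) \<in> F \<Longrightarrow> f z \<le> f w"
  proof -
    have "Max (f ` snd ` F) \<in> f ` snd ` F"
      using \<open>finite F\<close> \<open>F \<noteq> {}\<close> by simp
    then obtain x w where "(x, w) \<in> F" and "f w = Max (f ` snd ` F)"
      by force
    moreover have "f z \<le> Max (f ` snd ` F)" if "(y, z) \<in> F" for y z
      using that \<open>finite F\<close> by (force intro: Max_ge)
    ultimately show thesis
      using that by metis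
  qed
  have "{y. (y, w) \<in> F} \<subseteq> fst ` F"
    by force
  then have "indeg F w > 0"
    unfolding indeg_def using xw \<open>finite F\<close>
    by (metis card_gt_0_iff empty_iff finite_imageI finite_subset mem_Collect_eq)
  moreover have "w \<in> V"
    using xw FD \<open>Range D \<subseteq> V\<close> by blast
  ultimately have "outdeg F w > 0"
    using balanced by simp
  then obtain z where "(w, z) \<in> F"
    unfolding outdeg_def by (metis card.empty empty_Collect_eq less_irrefl)
  then show False
    using FD ranked w_max by (meson leD subsetD)
qed

lemma ranked_digraph_eulerian_counts_differ:
  fixes f :: "'a \<Rightarrow> 'b::linorder"
  assumes "finite D" and "Range D \<subseteq> V" and "\<And>u v. (u, v) \<in> D \<Longrightarrow> f u < f v"
  shows "even_eulerian V D \<noteq> odd_eulerian V D"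
proof -
  have eul: "eulerian_subdigraphs V D = {{}}"
  proof (intro equalityI subsetI)
    fix F assume F: "F \<in> eulerian_subdigraphs V D"
    then have "finite F"
      using \<open>finite D\<close> by (auto simp: eulerian_subdigraphs_def intro: finite_subset)
    with F show "F \<in> {{}}"
      using assms eulerian_subdigraph_of_ranked_empty by blast
  qed (simp add: eulerian_subdigraphs_def outdeg_def indeg_def)
  have "{F \<in> eulerian_subdigraphs V D. even (card F)} = {{}}"
    and "{F \<in> eulerian_subdigraphs V D. odd (card F)} = {}"
    unfolding eul by auto
  then show ?thesis
    unfolding even_eulerian_def odd_eulerian_def by (simp only:) simp
qed

lemma AT_attained:
  assumes G: "simple_graph V E"
  shows "\<exists>D. orientation E D \<and> (\<forall>v\<in>V. outdeg D v < AT V E) \<and>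
             even_eulerian V D \<noteq> odd_eulerian V D"
proof -
  have "finite V"
    using G by (simp add: simple_graph_def)
  then obtain f :: "'a \<Rightarrow> nat" where "inj_on f V"
    using finite_imp_inj_to_nat_seg by blast
  define D where "D = {(u, v). {u, v} \<in> E \<and> f u < f v}"
  have ori: "orientation E D"
    unfolding D_def using G \<open>inj_on f V\<close> by (rule orientation_by_ranking)
  have "D \<subseteq> V \<times> V"
    unfolding D_def using G by (auto dest: simple_graph_edgeD)
  then have "finite D" and "Range D \<subseteq> V"
    using \<open>finite V\<close> by (auto intro: finite_subset)
  then have "even_eulerian V D \<noteq> odd_eulerian V D"
    by (rule ranked_digraph_eulerian_counts_differ[where f = f]) (simp add: D_def)
  moreover have "outdeg D v < Suc (card V)" for v
    unfolding outdeg_def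
    using card_mono[OF \<open>finite V\<close> orientation_out_neighbours_subset[OF G ori]]
    by (rule le_imp_less_Suc)
  ultimately have "\<exists>k D. orientation E D \<and> (\<forall>v\<in>V. outdeg D v < k) \<and>
                         even_eulerian V D \<noteq> odd_eulerian V D"
    using ori by blast
  then show ?thesis
    unfolding AT_def by (rule LeastI_ex)
qed

lemma sum_card_in_arcs_eq_sum_card_out_arcs:
  assumes "finite S"
  shows "(\<Sum>v\<in>S. card {u\<in>S. (u, v) \<in> D}) = (\<Sum>v\<in>S. card {u\<in>S. (v, u) \<in> D})"
proof -
  have "(\<Sum>v\<in>S. card {u\<in>S. (u, v) \<in> D}) = card (SIGMA v:S. {u\<in>S. (u, v) \<in> D})"
    using assms by (simp add: card_SigmaI)
  also have "\<dots> = card (prod.swap ` (SIGMA v:S. {u\<in>S. (u, v) \<in> D}))"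
    by (simp add: card_image)
  also have "prod.swap ` (SIGMA v:S. {u\<in>S. (u, v) \<in> D}) = (SIGMA v:S. {u\<in>S. (v, u) \<in> D})"
    by force
  also have "card \<dots> = (\<Sum>v\<in>S. card {u\<in>S. (v, u) \<in> D})"
    using assms by (simp add: card_SigmaI)
  finally show ?thesis .
qed

lemma orientation_sum_degrees_within_le:
  assumes "simple_graph V E" and "orientation E D" and "finite S"
  shows "(\<Sum>v\<in>S. card {u\<in>S. {v, u} \<in> E}) \<le> 2 * (\<Sum>v\<in>S. card {u\<in>S. (v, u) \<in> D})"
proof -
  have "card {u\<in>S. {v, u} \<in> E} \<le> card {u\<in>S. (v, u) \<in> D} + card {u\<in>S. (u, v) \<in> D}" for v
  proof -
    have "{u\<in>S. {v, u} \<in> E} \<subseteq> {u\<in>S. (v, u) \<in> D} \<union> {u\<in>S. (u, v) \<in> D}"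
      using assms(1,2) by (auto dest: orientation_edge_cases simple_graph_edgeD)
    then have "card {u\<in>S. {v, u} \<in> E} \<le> card ({u\<in>S. (v, u) \<in> D} \<union> {u\<in>S. (u, v) \<in> D})"
      using \<open>finite S\<close> by (intro card_mono) auto
    also have "\<dots> \<le> card {u\<in>S. (v, u) \<in> D} + card {u\<in>S. (u, v) \<in> D}"
      by (rule card_Un_le)
    finally show ?thesis .
  qed
  then have "(\<Sum>v\<in>S. card {u\<in>S. {v, u} \<in> E}) \<le>
             (\<Sum>v\<in>S. card {u\<in>S. (v, u) \<in> D}) + (\<Sum>v\<in>S. card {u\<in>S. (u, v) \<in> D})"
    by (simp add: sum_mono flip: sum.distrib)
  then show ?thesis
    using sum_card_in_arcs_eq_sum_card_out_arcs[OF \<open>finite S\<close>] by simp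
qed

lemma orientation_low_degree_vertex:
  assumes G: "simple_graph V E" and ori: "orientation E D" and out: "\<forall>v\<in>V. outdeg D v < a"
    and "S \<subseteq> V" and "S \<noteq> {}"
  shows "\<exists>v\<in>S. card {u\<in>S. {v, u} \<in> E} < 2 * a"
proof -
  have "finite S"
    using G \<open>S \<subseteq> V\<close> by (auto simp: simple_graph_def intro: finite_subset)
  have "card {u\<in>S. (v, u) \<in> D} < a" if "v \<in> S" for v
  proof -
    have "card {u\<in>S. (v, u) \<in> D} \<le> outdeg D v"
      unfolding outdeg_def using orientation_out_neighbours_subset[OF G ori] G
      by (intro card_mono) (auto simp: simple_graph_def intro: finite_subset)
    then show ?thesis
      using out that \<open>S \<subseteq> V\<close> by fastforce
  qed
  then have "(\<Sum>v\<in>S. card {u\<in>S. (v, u) \<in> D}) < (\<Sum>v\<in>S. a)"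
    using \<open>finite S\<close> \<open>S \<noteq> {}\<close> by (intro sum_strict_mono) auto
  then have "2 * (\<Sum>v\<in>S. card {u\<in>S. (v, u) \<in> D}) < 2 * (\<Sum>v\<in>S. a)"
    by (rule mult_strict_left_mono) simp
  with orientation_sum_degrees_within_le[OF G ori \<open>finite S\<close>]
  have "(\<Sum>v\<in>S. card {u\<in>S. {v, u} \<in> E}) < 2 * (\<Sum>v\<in>S. a)"
    by (rule le_less_trans)
  then have "(\<Sum>v\<in>S. card {u\<in>S. {v, u} \<in> E}) < (\<Sum>v\<in>S. 2 * a)"
    by (simp add: sum_distrib_left)
  then show ?thesis
    by (meson not_less sum_mono)
qed

lemma corr_assignment_edgeD:
  assumes "corr_assignment V E k L C" and "{u, v} \<in> E"
  shows "C u v \<subseteq> L u \<times> L v" and "C v u = (C u v)\<inverse>"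
    and "(c, d) \<in> C u v \<Longrightarrow> (c', d) \<in> C u v \<Longrightarrow> c = c'"
  using assms unfolding corr_assignment_def by blast+

lemma corr_forbidden_colours_card_le:
  assumes ca: "corr_assignment V E k L C" and "v \<in> V" and "finite N"
    and N: "\<And>u. u \<in> N \<Longrightarrow> {v, u} \<in> E"
  shows "card (\<Union>u\<in>N. {c. (c, \<phi> u) \<in> C v u}) \<le> card N"
proof -
  have "card {c. (c, \<phi> u) \<in> C v u} \<le> 1" if "u \<in> N" for u
  proof -
    have "{c. (c, \<phi> u) \<in> C v u} \<subseteq> L v"
      using corr_assignment_edgeD(1)[OF ca N[OF that]] by blast
    then have "finite {c. (c, \<phi> u) \<in> C v u}"
      using ca \<open>v \<in> V\<close> by (auto simp: corr_assignment_def intro: finite_subset)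
    then show ?thesis
      using corr_assignment_edgeD(3)[OF ca N[OF that]] by (auto simp: card_le_Suc0_iff_eq)
  qed
  then have "(\<Sum>u\<in>N. card {c. (c, \<phi> u) \<in> C v u}) \<le> (\<Sum>u\<in>N. 1)"
    by (rule sum_mono)
  then have "(\<Sum>u\<in>N. card {c. (c, \<phi> u) \<in> C v u}) \<le> card N"
    by simp
  then show ?thesis
    using card_UN_le[OF \<open>finite N\<close>] le_trans by blast
qed

lemma corr_coloring_extend:
  assumes G: "simple_graph V E" and ca: "corr_assignment V E k L C"
    and "v \<in> V" and "S \<subseteq> V" and few: "card {u\<in>S. {v, u} \<in> E} < k"
    and \<phi>: "corr_coloring S {e\<in>E. e \<subseteq> S} L C \<phi>"
  shows "\<exists>c. corr_coloring (insert v S) {e\<in>E. e \<subseteq> insert v S} L C (\<phi>(v := c))"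
proof -
  define N where "N = {u\<in>S. {v, u} \<in> E}"
  define forbidden where "forbidden = (\<Union>u\<in>N. {c. (c, \<phi> u) \<in> C v u})"
  have "finite N"
    using G \<open>S \<subseteq> V\<close> by (auto simp: N_def simple_graph_def intro: finite_subset)
  have Lv: "finite (L v)" "card (L v) = k"
    using ca \<open>v \<in> V\<close> by (auto simp: corr_assignment_def)
  have "card forbidden < card (L v)"
    using corr_forbidden_colours_card_le[OF ca \<open>v \<in> V\<close> \<open>finite N\<close>, of \<phi>] few Lv
    by (simp add: N_def forbidden_def)
  moreover have "forbidden \<subseteq> L v"
    unfolding forbidden_def N_def using corr_assignment_edgeD(1)[OF ca] by blast
  ultimately have "\<not> L v \<subseteq> forbidden"
    using Lv(1) by (meson card_mono finite_subset leD)
  then obtain c where c: "c \<in> L v" "c \<notin> forbidden"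
    by blast
  have "corr_coloring (insert v S) {e\<in>E. e \<subseteq> insert v S} L C (\<phi>(v := c))"
    unfolding corr_coloring_def
  proof (intro conjI ballI allI impI)
    fix x assume "x \<in> insert v S"
    then show "(\<phi>(v := c)) x \<in> L x"
      using \<phi> c by (auto simp: corr_coloring_def)
  next
    fix x y assume xy: "{x, y} \<in> {e\<in>E. e \<subseteq> insert v S}"
    then have "x \<noteq> y"
      using G by (auto dest: simple_graph_edgeD)
    consider "x = v" | "y = v" | "x \<noteq> v" "y \<noteq> v"
      by blast
    then show "((\<phi>(v := c)) x, (\<phi>(v := c)) y) \<notin> C x y"
    proof cases
      case 1
      then have "y \<in> N"
        using xy \<open>x \<noteq> y\<close> by (auto simp: N_def)
      then show ?thesis
        using c 1 \<open>x \<noteq> y\<close> by (auto simp: forbidden_def)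
    next
      case 2
      then have "x \<in> N"
        using xy \<open>x \<noteq> y\<close> by (auto simp: N_def insert_commute)
      moreover have "C v x = (C x v)\<inverse>"
        using corr_assignment_edgeD(2)[OF ca] xy 2 by blast
      ultimately show ?thesis
        using c 2 \<open>x \<noteq> y\<close> by (auto simp: forbidden_def)
    next
      case 3
      then show ?thesis
        using \<phi> xy by (auto simp: corr_coloring_def)
    qed
  qed
  then show ?thesis ..
qed

lemma corr_coloring_greedy:
  assumes G: "simple_graph V E" and ca: "corr_assignment V E k L C"
    and low: "\<And>S. S \<subseteq> V \<Longrightarrow> S \<noteq> {} \<Longrightarrow> \<exists>v\<in>S. card {u\<in>S. {v, u} \<in> E} < k"
  shows "\<exists>\<phi>. corr_coloring V E L C \<phi>"
proof -
  have induced: "\<exists>\<phi>. corr_coloring S {e\<in>E. e \<subseteq> S} L C \<phi>" if "finite S" and "S \<subseteq> V" for S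
    using that
  proof (induction S rule: finite_psubset_induct)
    case (psubset S)
    show ?case
    proof (cases "S = {}")
      case True
      then show ?thesis
        by (auto simp: corr_coloring_def)
    next
      case False
      obtain v where "v \<in> S" and few: "card {u\<in>S. {v, u} \<in> E} < k"
        using low[OF psubset.prems False] by blast
      have "S - {v} \<subset> S" and "S - {v} \<subseteq> V"
        using \<open>v \<in> S\<close> psubset.prems by auto
      then obtain \<phi> where "corr_coloring (S - {v}) {e\<in>E. e \<subseteq> S - {v}} L C \<phi>"
        using psubset.IH by blast
      moreover have "v \<in> V"
        using \<open>v \<in> S\<close> psubset.prems by blast
      moreover have "card {u\<in>S - {v}. {v, u} \<in> E} < k"
        using psubset.hyps by (intro le_less_trans[OF card_mono few]) auto
      ultimately obtain c
        where "corr_coloring (insert v (S - {v})) {e\<in>E. e \<subseteq> insert v (S - {v})} L C (\<phi>(v := c))"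
        using corr_coloring_extend[OF G ca _ \<open>S - {v} \<subseteq> V\<close>] by blast
      moreover have "insert v (S - {v}) = S"
        using \<open>v \<in> S\<close> by blast
      ultimately show ?thesis
        by auto
    qed
  qed
  have "finite V" and "{e\<in>E. e \<subseteq> V} = E"
    using G by (auto simp: simple_graph_def)
  then show ?thesis
    using induced[OF \<open>finite V\<close> order_refl] by simp
qed

theorem theorem4:
  fixes V :: "'a set" and E :: "'a set set"
  assumes "simple_graph V E"
  shows "chi_DP V E \<le> 2 * AT V E"
proof -
  obtain D where ori: "orientation E D" and out: "\<forall>v\<in>V. outdeg D v < AT V E"
    using AT_attained[OF assms] by blast
  have "\<exists>\<phi>. corr_coloring V E L C \<phi>" if "corr_assignment V E (2 * AT V E) L C" for L C
    using corr_coloring_greedy[OF assms that] orientation_low_degree_vertex[OF assms ori out]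
    by blast
  then show ?thesis
    unfolding chi_DP_def by (simp add: Least_le)
qed

end
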